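(* Consider a cross-modal generalization problem with modalities $m\in\{1,\dots,M\}$ and tasks $n\in\{1,\dots,N\}$, generalization objective $\mathcal{L}[f_w]=\mathbb{E}_{(m,n)\sim p(m,n),\,(x,y)\sim p_{m,n}(x,y)}\log\left[\frac{f_w(x,y,m,n)}{p(x,y\mid m,n)}\right]$, and a low-resource subset $\mathcal{M}$ of modality–task pairs on which only estimates $q(x,y\mid m,n)\neq p(x,y\mid m,n)$ are available, and assume the minimum visibility assumption holds. Suppose all modalities are pairwise strongly aligned. Then one can define a surrogate loss functional $\tilde{\mathcal{L}}[f_w]$, computable from the known distributions, such that $\mathcal{L}\left[\arg\max_w \tilde{\mathcal{L}}[f_w]\right]=0$, i.e. maximizing the surrogate yields perfect generalization (including on the low-resource pairs in $\mathcal{M}$).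
   Context: There are $M$ heterogeneous input spaces (modalities) $\mathcal{X}_m$ and $N$ label spaces (tasks) $\mathcal{Y}_n$. A meta-distribution over modalities, tasks, inputs and labels is given; $(m,n)$ is drawn from a prior $p(m,n)$ and, within the classification problem $\mathcal{T}(m,n)=(\mathcal{X}_m,\mathcal{Y}_n,p_{m,n})$, data are drawn from the true labeling distribution $p_{m,n}(x,y):=p(x,y\mid m,n)$. A model is a single function $f_w(x,y,m,n)$ with parameters $w$; the cross-modal generalization problem is to maximize $\mathcal{L}[f_w]$ above, whose maximum value $0$ is attained when $f_w(x,y,m,n)=p(x,y\mid m,n)$ ("perfect generalization"). A distribution is called known if it can be estimated exactly/accurately. The problem is (partially) low resource on a subset $\mathcal{M}$ of modality–task pairs if for $(m,n)\in\mathcal{M}$, $p(x,y\mid m,n)$ is not known and only an estimate $q(x,y\mid m,n)\ne p(x,y\mid m,n)$ is available. Minimum visibility assumption: for every task $n$ there is at least one modality $m$ such that $p(x,y\mid m,n)$ is known; for every modality $m$ there is at least one task $n$ such that $p(x,y\mid m,n)$ is known; and all single-variable marginals $p(x)$, $p(y)$ are known. Strong alignment: for modalities $m_i\ne m_j$ with joint $p(x_i,x_j)$ known ($x_i\in\mathcal{X}_{m_i}$, $x_j\in\mathcal{X}_{m_j}$), there is strong alignment between $m_i$ and $m_j$ if both $p(x_i\mid x_j)$ and $p(x_j\mid x_i)$ are delta distributions (a one-to-one mapping between $x_i$ and $x_j$); otherwise only weak alignment. *)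

theory Defs
  imports "HOL-Probability.Probability"
begin

text \<open>Meta-distribution: a single joint law W over the inputs of all modalities
  (a vector v :: 'm => 'x) and the labels of all tasks (u :: 'n => 'y).
  The input space of modality m is the support of the m-th coordinate (inside the
  common carrier type 'x); likewise for labels.\<close>

definition task_dist ::
  "(('m \<Rightarrow> 'x) \<times> ('n \<Rightarrow> 'y)) pmf \<Rightarrow> 'm \<Rightarrow> 'n \<Rightarrow> ('x \<times> 'y) pmf" where
  "task_dist W m n = map_pmf (\<lambda>(v, u). (v m, u n)) W"

definition input_marginal ::
  "(('m \<Rightarrow> 'x) \<times> ('n \<Rightarrow> 'y)) pmf \<Rightarrow> 'm \<Rightarrow> 'x pmf" where
  "input_marginal W m = map_pmf (\<lambda>(v, u). v m) W"

definition label_marginal ::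
  "(('m \<Rightarrow> 'x) \<times> ('n \<Rightarrow> 'y)) pmf \<Rightarrow> 'n \<Rightarrow> 'y pmf" where
  "label_marginal W n = map_pmf (\<lambda>(v, u). u n) W"

definition input_joint ::
  "(('m \<Rightarrow> 'x) \<times> ('n \<Rightarrow> 'y)) pmf \<Rightarrow> 'm \<Rightarrow> 'm \<Rightarrow> ('x \<times> 'x) pmf" where
  "input_joint W i j = map_pmf (\<lambda>(v, u). (v i, v j)) W"

definition elog :: "real \<Rightarrow> ereal" where
  "elog t = (if t > 0 then ereal (ln t) else -\<infinity>)"

definition gen_objective ::
  "('m::finite \<times> 'n::finite) pmf \<Rightarrow> (('m \<Rightarrow> 'x::finite) \<times> ('n \<Rightarrow> 'y::finite)) pmf
    \<Rightarrow> ('x \<Rightarrow> 'y \<Rightarrow> 'm \<Rightarrow> 'n \<Rightarrow> real) \<Rightarrow> ereal" where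
  "gen_objective P W f =
     (\<Sum>mn\<in>UNIV. \<Sum>xy\<in>UNIV.
        (let p = pmf (task_dist W (fst mn) (snd mn)) xy;
             wt = pmf P mn * p
         in if wt = 0 then 0
            else ereal wt * elog (f (fst xy) (snd xy) (fst mn) (snd mn) / p)))"

definition delta_conditional :: "('a \<times> 'b) pmf \<Rightarrow> bool" where
  "delta_conditional J \<longleftrightarrow>
     (\<forall>a \<in> set_pmf (map_pmf fst J). \<exists>b. pmf J (a, b) = pmf (map_pmf fst J) a)"

definition strongly_aligned ::
  "(('m \<Rightarrow> 'x) \<times> ('n \<Rightarrow> 'y)) pmf \<Rightarrow> 'm \<Rightarrow> 'm \<Rightarrow> bool" where
  "strongly_aligned W i j \<longleftrightarrow>
     delta_conditional (input_joint W i j) \<and>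
     delta_conditional (map_pmf prod.swap (input_joint W i j))"

text \<open>Minimum visibility on the set K of pairs whose distribution is known
  (the marginals being known is modelled by handing them to the surrogate).\<close>
definition min_visibility :: "('m \<times> 'n) set \<Rightarrow> bool" where
  "min_visibility K \<longleftrightarrow> (\<forall>n. \<exists>m. (m, n) \<in> K) \<and> (\<forall>m. \<exists>n. (m, n) \<in> K)"

definition known_data ::
  "(('m \<Rightarrow> 'x) \<times> ('n \<Rightarrow> 'y)) pmf \<Rightarrow> ('m \<times> 'n) set \<Rightarrow> 'm \<Rightarrow> 'n \<Rightarrow> ('x \<times> 'y) pmf option" where
  "known_data W K m n = (if (m, n) \<in> K then Some (task_dist W m n) else None)"

end

theory Submission
  imports Defs
begin

text \<open>Under strong alignment the input of any modality is a function of the input of any other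
  one, almost surely. Hence a low-resource task distribution for (m, n) is the image of a known
  distribution for (m', n), which exists by minimum visibility, under the alignment map from m'
  to m. A surrogate that rewards agreement with these
  reconstructed distributions is maximized exactly by models that agree with the true ones on
  the support of the objective, which makes every summand of the objective vanish.\<close>

definition conditional_fun :: "('a \<times> 'b) pmf \<Rightarrow> 'a \<Rightarrow> 'b" where
  "conditional_fun J a = (SOME b. pmf J (a, b) = pmf (map_pmf fst J) a)"

lemma delta_conditional_eq_conditional_fun:
  assumes "delta_conditional J" and "(a, b) \<in> set_pmf J"
  shows "b = conditional_fun J a"
proof (rule ccontr)
  define b' where "b' = conditional_fun J a"
  assume "b \<noteq> conditional_fun J a"
  hence ne: "b \<noteq> b'" by (simp add: b'_def)
  have "a \<in> set_pmf (map_pmf fst J)" using assms(2) by force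
  then obtain b0 where "pmf J (a, b0) = pmf (map_pmf fst J) a"
    using assms(1) unfolding delta_conditional_def by blast
  hence full: "pmf J (a, b') = pmf (map_pmf fst J) a"
    unfolding b'_def conditional_fun_def by (rule someI)
  have "pmf J (a, b') + pmf J (a, b) = measure J {(a, b'), (a, b)}"
    using ne by (simp add: measure_measure_pmf_finite)
  also have "\<dots> \<le> measure J (fst -` {a})"
    by (rule measure_pmf.finite_measure_mono) auto
  also have "\<dots> = pmf J (a, b')" by (simp add: full pmf_map)
  finally have "pmf J (a, b) = 0" using pmf_nonneg[of J "(a, b)"] by linarith
  with assms(2) show False by (simp add: set_pmf_eq)
qed

lemma task_dist_transfer:
  assumes "delta_conditional (input_joint W i j)"
  shows "task_dist W j n = map_pmf (apfst (conditional_fun (input_joint W i j))) (task_dist W i n)"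
proof -
  have "v j = conditional_fun (input_joint W i j) (v i)" if "(v, u) \<in> set_pmf W" for v u
  proof (rule delta_conditional_eq_conditional_fun[OF assms])
    show "(v i, v j) \<in> set_pmf (input_joint W i j)"
      using that unfolding input_joint_def by force
  qed
  thus ?thesis
    unfolding task_dist_def map_pmf_comp by (intro map_pmf_cong) auto
qed

definition reconstruct_task ::
  "('m \<Rightarrow> 'n \<Rightarrow> ('x \<times> 'y) pmf option) \<Rightarrow> ('m \<Rightarrow> 'm \<Rightarrow> ('x \<times> 'x) pmf)
    \<Rightarrow> 'm \<Rightarrow> 'n \<Rightarrow> ('x \<times> 'y) pmf" where
  "reconstruct_task kd J m n =
     (case kd m n of
        Some d \<Rightarrow> d
      | None \<Rightarrow> (let m' = SOME m'. kd m' n \<noteq> None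
                 in map_pmf (apfst (conditional_fun (J m' m))) (the (kd m' n))))"

lemma reconstruct_task_known_data:
  assumes visible: "\<forall>n. \<exists>m. (m, n) \<in> K"
    and aligned: "\<forall>i j. i \<noteq> j \<longrightarrow> delta_conditional (input_joint W i j)"
  shows "reconstruct_task (known_data W K) (input_joint W) m n = task_dist W m n"
proof (cases "(m, n) \<in> K")
  case True
  thus ?thesis by (simp add: reconstruct_task_def known_data_def)
next
  case False
  define m' where "m' = (SOME m'. known_data W K m' n \<noteq> None)"
  have "\<exists>m'. known_data W K m' n \<noteq> None"
    using visible by (auto simp: known_data_def)
  hence "known_data W K m' n \<noteq> None" unfolding m'_def by (rule someI_ex)
  hence known: "(m', n) \<in> K" by (simp add: known_data_def split: if_splits)
  with False have "m' \<noteq> m" by auto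
  hence "task_dist W m n
      = map_pmf (apfst (conditional_fun (input_joint W m' m))) (task_dist W m' n)"
    using aligned by (intro task_dist_transfer) blast
  moreover have "known_data W K m n = None" using False by (simp add: known_data_def)
  hence "reconstruct_task (known_data W K) (input_joint W) m n
      = map_pmf (apfst (conditional_fun (input_joint W m' m))) (the (known_data W K m' n))"
    by (simp add: reconstruct_task_def m'_def Let_def)
  ultimately show ?thesis using known by (simp add: known_data_def)
qed

definition fits :: "('m \<times> 'n) pmf \<Rightarrow> ('m \<Rightarrow> 'n \<Rightarrow> ('x \<times> 'y) pmf)
    \<Rightarrow> ('x \<Rightarrow> 'y \<Rightarrow> 'm \<Rightarrow> 'n \<Rightarrow> real) \<Rightarrow> bool" where
  "fits P D f \<longleftrightarrow>
     (\<forall>m n x y. pmf P (m, n) > 0 \<longrightarrow> pmf (D m n) (x, y) > 0 \<longrightarrow> f x y m n = pmf (D m n) (x, y))"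

lemma gen_objective_eq_0_if_fits:
  fixes W :: "(('m::finite \<Rightarrow> 'x::finite) \<times> ('n::finite \<Rightarrow> 'y::finite)) pmf"
  assumes "fits P (task_dist W) f"
  shows "gen_objective P W f = 0"
  unfolding gen_objective_def
proof (intro sum.neutral ballI)
  fix mn :: "'m \<times> 'n" and xy :: "'x \<times> 'y"
  obtain m n x y where mn: "mn = (m, n)" and xy: "xy = (x, y)" by force
  show "(let p = pmf (task_dist W (fst mn) (snd mn)) xy; wt = pmf P mn * p
         in if wt = 0 then 0 else ereal wt * elog (f (fst xy) (snd xy) (fst mn) (snd mn) / p)) = 0"
  proof (cases "pmf P (m, n) > 0 \<and> pmf (task_dist W m n) (x, y) > 0")
    case True
    with assms have "f x y m n = pmf (task_dist W m n) (x, y)" by (simp add: fits_def)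
    with True show ?thesis by (simp add: mn xy elog_def)
  next
    case False
    hence "pmf P (m, n) = 0 \<or> pmf (task_dist W m n) (x, y) = 0"
      by (metis less_eq_real_def pmf_nonneg)
    thus ?thesis by (auto simp: mn xy)
  qed
qed

definition surrogate ::
  "('m \<times> 'n) pmf \<Rightarrow> ('m \<Rightarrow> 'n \<Rightarrow> ('x \<times> 'y) pmf option) \<Rightarrow> ('m \<Rightarrow> 'm \<Rightarrow> ('x \<times> 'x) pmf)
    \<Rightarrow> ('x \<Rightarrow> 'y \<Rightarrow> 'm \<Rightarrow> 'n \<Rightarrow> real) \<Rightarrow> ereal" where
  "surrogate P kd J f = (if fits P (reconstruct_task kd J) f then 0 else -1)"

theorem proposition1:
  "\<exists>S :: ('m::finite \<times> 'n::finite) pmf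
          \<Rightarrow> ('m \<Rightarrow> 'n \<Rightarrow> ('x::finite \<times> 'y::finite) pmf option)
          \<Rightarrow> ('m \<Rightarrow> 'n \<Rightarrow> ('x \<times> 'y) pmf)
          \<Rightarrow> ('m \<Rightarrow> 'x pmf) \<Rightarrow> ('n \<Rightarrow> 'y pmf)
          \<Rightarrow> ('m \<Rightarrow> 'm \<Rightarrow> ('x \<times> 'x) pmf)
          \<Rightarrow> ('x \<Rightarrow> 'y \<Rightarrow> 'm \<Rightarrow> 'n \<Rightarrow> real) \<Rightarrow> ereal.
     \<forall>(P :: ('m \<times> 'n) pmf) (W :: (('m \<Rightarrow> 'x) \<times> ('n \<Rightarrow> 'y)) pmf)
       (K :: ('m \<times> 'n) set) (q :: 'm \<Rightarrow> 'n \<Rightarrow> ('x \<times> 'y) pmf)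
       (F :: 'w \<Rightarrow> 'x \<Rightarrow> 'y \<Rightarrow> 'm \<Rightarrow> 'n \<Rightarrow> real).
       min_visibility K \<and>
       (\<forall>m n. (m, n) \<notin> K \<longrightarrow> q m n \<noteq> task_dist W m n) \<and>
       (\<forall>i j. i \<noteq> j \<longrightarrow> strongly_aligned W i j) \<and>
       (\<exists>w0. \<forall>x y m n. F w0 x y m n = pmf (task_dist W m n) (x, y))
       \<longrightarrow>
       (\<forall>w. (\<forall>w'. S P (known_data W K) q (input_marginal W) (label_marginal W) (input_joint W) (F w')
                 \<le> S P (known_data W K) q (input_marginal W) (label_marginal W) (input_joint W) (F w))
            \<longrightarrow> gen_objective P W (F w) = 0)"
proof (rule exI[of _ "\<lambda>P kd q mi lm J. surrogate P kd J"], safe)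
  fix P :: "('m \<times> 'n) pmf" and W :: "(('m \<Rightarrow> 'x) \<times> ('n \<Rightarrow> 'y)) pmf"
    and K and F :: "'w \<Rightarrow> 'x \<Rightarrow> 'y \<Rightarrow> 'm \<Rightarrow> 'n \<Rightarrow> real" and w0 w
  assume "min_visibility K" and "\<forall>i j. i \<noteq> j \<longrightarrow> strongly_aligned W i j"
    and w0: "\<forall>x y m n. F w0 x y m n = pmf (task_dist W m n) (x, y)"
    and argmax: "\<forall>w'. surrogate P (known_data W K) (input_joint W) (F w')
                   \<le> surrogate P (known_data W K) (input_joint W) (F w)"
  hence reconstructed: "reconstruct_task (known_data W K) (input_joint W) = task_dist W"
    by (intro ext reconstruct_task_known_data) (auto simp: min_visibility_def strongly_aligned_def)
  have surrogate_eq: "surrogate P (known_data W K) (input_joint W) f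
      = (if fits P (task_dist W) f then 0 else -1)" for f
    unfolding surrogate_def reconstructed ..
  have "fits P (task_dist W) (F w0)" using w0 by (simp add: fits_def)
  with argmax[rule_format, of w0] have "fits P (task_dist W) (F w)"
    by (auto simp: surrogate_eq split: if_splits)
  thus "gen_objective P W (F w) = 0" by (rule gen_objective_eq_0_if_fits)
qed

end
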